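(* Let $\mathbb K$ be a field, $x\in\mathbb K$, $0\le r\le k$, and let $\chi_k^{(r)}$ be the character (trace function) of the module $\mathsf C_k^{(r)}$. Then for $0\le\ell\le k$, $$\chi_k^{(r)}(\mathbf 1_{\ell,k})=\begin{cases}\mathsf m_{\ell,r}=\dim\mathsf C_\ell^{(r)},& r\le\ell,\\ 0,& r>\ell.\end{cases}$$
   Context: A Motzkin $k$-diagram has top vertices $1,\dots,k$ and bottom vertices $1',\dots,k'$, edges each joining two distinct vertices, each vertex on at most one edge, edges planar. $\mathsf M_k(x)$ is the free $\mathbb K$-module on Motzkin $k$-diagrams with product: stack $d_1$ above $d_2$, let $d_3$ join outer vertices connected by a path, $d_1d_2=x^\kappa d_3$ with $\kappa$ the number of closed middle loops. $\mathbf 1_{\ell,k}$ is the diagram with vertical edges $j$—$j'$ for $j\le\ell$ and all other vertices isolated. Motzkin paths: $p=(a_1,\dots,a_k)$, $a_i\in\{-1,0,1\}$, partial sums $\ge0$, rank $\sum a_i$; $\mathcal P_k^r$ those of rank $r$, $\mathsf m_{k,r}=|\mathcal P_k^r|$. Index $i$ with $a_i=1$ is paired with the smallest $j>i$ with $a_i+\dots+a_j=0$ if it exists. 1-factor of $p$: row of vertices $1..k$, paired indices joined by an edge, unpaired $a_i=1$ white, others black. $\mathsf C_k^{(r)}$: free $\mathbb K$-module on $\mathcal P_k^r$ with $d\cdot p=x^{\kappa(d,p)}q$ if $\mathrm{rank}(q)=r$ and $0$ otherwise, where $d$ is placed above the 1-factor of $p$ (bottom vertex $i'$ identified with vertex $i$),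 $\kappa(d,p)$ is the number of closed loops formed, and $q$ is the 1-factor on the top vertices in which two top vertices are joined iff in a common component and a top vertex is white iff its component contains a white vertex of $p$. *)

theory Defs
  imports Main
begin

text \<open>A Motzkin path of length k is a list of k integers in {-1,0,1} whose
partial sums are nonnegative. Positions are 1-indexed: a_i = p ! (i-1).\<close>

definition motzkin_path :: "int list \<Rightarrow> bool" where
  "motzkin_path p \<longleftrightarrow> (\<forall>a\<in>set p. a \<in> {-1,0,1}) \<and>
     (\<forall>n\<le>length p. 0 \<le> sum_list (take n p))"

definition rank :: "int list \<Rightarrow> int" where
  "rank p = sum_list p"

definition paths :: "nat \<Rightarrow> nat \<Rightarrow> int list set" where
  "paths k r = {p. length p = k \<and> motzkin_path p \<and> rank p = int r}"

definition mcount :: "nat \<Rightarrow> nat \<Rightarrow> nat" where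
  "mcount k r = card (paths k r)"

definition psum :: "int list \<Rightarrow> nat \<Rightarrow> nat \<Rightarrow> int" where
  "psum p i j = (\<Sum>t\<in>{i..j}. p ! (t - 1))"

definition paired :: "int list \<Rightarrow> nat \<Rightarrow> nat \<Rightarrow> bool" where
  "paired p i j \<longleftrightarrow> 1 \<le> i \<and> i < j \<and> j \<le> length p \<and> p ! (i - 1) = 1 \<and>
     psum p i j = 0 \<and> (\<forall>t. i < t \<and> t < j \<longrightarrow> psum p i t \<noteq> 0)"

definition white :: "int list \<Rightarrow> nat \<Rightarrow> bool" where
  "white p i \<longleftrightarrow> 1 \<le> i \<and> i \<le> length p \<and> p ! (i - 1) = 1 \<and> \<not> (\<exists>j. paired p i j)"

datatype vtx = Top nat | Bot nat

definition vidx :: "vtx \<Rightarrow> nat" where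
  "vidx v = (case v of Top i \<Rightarrow> i | Bot i \<Rightarrow> i)"

text \<open>Planarity (standard convention): drawing top vertices on a line above the
bottom ones, two edges cross iff the usual interleaving conditions hold.\<close>
definition crossing :: "vtx \<Rightarrow> vtx \<Rightarrow> vtx \<Rightarrow> vtx \<Rightarrow> bool" where
  "crossing a b c d \<longleftrightarrow>
    (case (a, b, c, d) of
       (Top i, Top j, Top s, Top t) \<Rightarrow> i < s \<and> s < j \<and> j < t
     | (Bot i, Bot j, Bot s, Bot t) \<Rightarrow> i < s \<and> s < j \<and> j < t
     | (Top i, Top j, Top s, Bot t) \<Rightarrow> i < s \<and> s < j
     | (Bot i, Bot j, Bot s, Top t) \<Rightarrow> i < s \<and> s < j
     | (Top i, Bot j, Top s, Bot t) \<Rightarrow> i < s \<and> t < j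
     | _ \<Rightarrow> False)"

definition motzkin_diagram :: "nat \<Rightarrow> vtx set set \<Rightarrow> bool" where
  "motzkin_diagram k d \<longleftrightarrow>
     (\<forall>e\<in>d. \<exists>u v. e = {u, v} \<and> u \<noteq> v \<and> 1 \<le> vidx u \<and> vidx u \<le> k \<and> 1 \<le> vidx v \<and> vidx v \<le> k) \<and>
     (\<forall>e\<in>d. \<forall>e'\<in>d. e \<noteq> e' \<longrightarrow> e \<inter> e' = {}) \<and>
     (\<forall>a b c e. {a, b} \<in> d \<longrightarrow> {c, e} \<in> d \<longrightarrow> \<not> crossing a b c e)"

text \<open>The diagram 1_{l,k}: vertical edges j -- j' for j \<le> l, all else isolated.\<close>
definition idl :: "nat \<Rightarrow> nat \<Rightarrow> vtx set set" where
  "idl l k = {{Top j, Bot j} | j. 1 \<le> j \<and> j \<le> l \<and> j \<le> k}"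

text \<open>Vertices of the stacked picture: top vertices of d, and middle vertices
(bottom vertices of d identified with the vertices of the 1-factor of p).\<close>
datatype svtx = T nat | Mid nat

definition emb :: "vtx \<Rightarrow> svtx" where
  "emb v = (case v of Top i \<Rightarrow> T i | Bot i \<Rightarrow> Mid i)"

definition sadj :: "vtx set set \<Rightarrow> int list \<Rightarrow> svtx \<Rightarrow> svtx \<Rightarrow> bool" where
  "sadj d p u v \<longleftrightarrow>
     (\<exists>a b. {a, b} \<in> d \<and> a \<noteq> b \<and> u = emb a \<and> v = emb b) \<or>
     (\<exists>i j. (paired p i j \<or> paired p j i) \<and> u = Mid i \<and> v = Mid j)"

definition sconn :: "vtx set set \<Rightarrow> int list \<Rightarrow> svtx \<Rightarrow> svtx \<Rightarrow> bool" where
  "sconn d p u v \<longleftrightarrow> (u, v) \<in> {(a, b). sadj d p a b}\<^sup>*"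

definition svert :: "nat \<Rightarrow> svtx set" where
  "svert k = {T i | i. 1 \<le> i \<and> i \<le> k} \<union> {Mid i | i. 1 \<le> i \<and> i \<le> k}"

definition scomponents :: "nat \<Rightarrow> vtx set set \<Rightarrow> int list \<Rightarrow> svtx set set" where
  "scomponents k d p = {{v. sconn d p u v} | u. u \<in> svert k}"

definition is_mid :: "svtx \<Rightarrow> bool" where
  "is_mid v = (case v of Mid _ \<Rightarrow> True | T _ \<Rightarrow> False)"

text \<open>Closed loops: components consisting of middle vertices only, each of degree 2.\<close>
definition kappa :: "nat \<Rightarrow> vtx set set \<Rightarrow> int list \<Rightarrow> nat" where
  "kappa k d p = card {C \<in> scomponents k d p.
      (\<forall>v\<in>C. is_mid v) \<and> (\<forall>v\<in>C. card {w. sadj d p v w} = 2)}"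

text \<open>Coefficient of the basis path q in d \<cdot> p: it is x^kappa if the 1-factor on
the top vertices produced by stacking d on the 1-factor of p is the 1-factor of q,
and 0 otherwise. (The rank condition is imposed by the basis of C_k^(r).)\<close>
definition act_coeff :: "'a::field \<Rightarrow> nat \<Rightarrow> vtx set set \<Rightarrow> int list \<Rightarrow> int list \<Rightarrow> 'a" where
  "act_coeff x k d p q =
     (if (\<forall>i j. 1 \<le> i \<and> i \<le> k \<and> 1 \<le> j \<and> j \<le> k \<and> i \<noteq> j \<longrightarrow>
              ((paired q i j \<or> paired q j i) \<longleftrightarrow> sconn d p (T i) (T j))) \<and>
         (\<forall>i. 1 \<le> i \<and> i \<le> k \<longrightarrow>
              (white q i \<longleftrightarrow> (\<exists>m. white p m \<and> sconn d p (T i) (Mid m))))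
      then x ^ kappa k d p else 0)"

text \<open>Character of C_k^(r): trace of the action of d on the free module with basis
paths k r, i.e. the sum of the diagonal coefficients.\<close>
definition character :: "'a::field \<Rightarrow> nat \<Rightarrow> nat \<Rightarrow> vtx set set \<Rightarrow> 'a" where
  "character x k r d = (\<Sum>p\<in>paths k r. act_coeff x k d p p)"

end

theory Submission
  imports Defs
begin

(* In the stacked picture of 1_{l,k} over the
   1-factor of p, the top vertex i is joined to the middle vertex i for i <= l and is
   isolated for i > l.  Hence:
   (1) if p has a nonzero step a_i at some i > l, then i is paired or white in p, but
       T i is isolated on top, so the 1-factor produced on top differs from that of p
       and the coefficient is 0;
   (2) if all steps after l vanish, every pairing of p lives inside {1..l}, the top
       1-factor reproduces that of p, and no closed loop appears, so the coefficient
       is x^0 = 1.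
   So the character counts the paths that are flat after l; padding with zeros is a
   bijection from paths of length l and rank r onto them, giving m_{l,r}, which is
   0 when r > l. *)

section \<open>Heights of a Motzkin path and its pairing\<close>

definition height :: "int list \<Rightarrow> nat \<Rightarrow> int" where
  "height p n = sum_list (take n p)"

lemma height_Suc: "n < length p \<Longrightarrow> height p (Suc n) = height p n + p ! n"
  by (simp add: height_def take_Suc_conv_app_nth)

lemma height_as_sum: "n \<le> length p \<Longrightarrow> height p n = (\<Sum>t\<in>{1..n}. p ! (t - 1))"
proof (induction n)
  case 0 then show ?case by (simp add: height_def)
next
  case (Suc n)
  have "{1..Suc n} = insert (Suc n) {1..n}" by auto
  then show ?case using Suc by (simp add: height_Suc)
qed

lemma psum_height:
  assumes "1 \<le> i" "i \<le> j" "j \<le> length p"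
  shows "psum p i j = height p j - height p (i - 1)"
proof -
  have split: "{i..j} = {1..j} - {1..i-1}" using assms by auto
  have "psum p i j = (\<Sum>t\<in>{1..j}. p ! (t - 1)) - (\<Sum>t\<in>{1..i-1}. p ! (t - 1))"
    unfolding psum_def split by (rule sum_diff) (use assms in auto)
  then show ?thesis using assms by (simp add: height_as_sum)
qed

lemma motzkin_step: "motzkin_path p \<Longrightarrow> t < length p \<Longrightarrow> p ! t \<in> {-1,0,1}"
  unfolding motzkin_path_def using nth_mem by blast

lemma motzkin_height_nonneg: "motzkin_path p \<Longrightarrow> n \<le> length p \<Longrightarrow> 0 \<le> height p n"
  unfolding motzkin_path_def height_def by blast

lemma paired_bounds: "paired p i j \<Longrightarrow> 1 \<le> i \<and> i < j \<and> j \<le> length p"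
  unfolding paired_def by auto

lemma paired_opens_up: "paired p i j \<Longrightarrow> p ! (i - 1) = 1"
  unfolding paired_def by auto

lemma paired_stays_above:
  assumes mp: "motzkin_path p" and pr: "paired p i j" and "i \<le> t" "t < j"
  shows "height p (i - 1) < height p t"
  using assms(3,4)
proof (induction t rule: dec_induct)
  case base
  from pr have "1 \<le> i" "i \<le> length p" "p ! (i - 1) = 1" unfolding paired_def by auto
  then show ?case using height_Suc[of "i - 1" p] by simp
next
  case (step n)
  from pr have j: "j \<le> length p" "1 \<le> i" and no_return: "\<forall>t. i < t \<and> t < j \<longrightarrow> psum p i t \<noteq> 0"
    unfolding paired_def by auto
  have n: "n < length p" using step j by simp
  have "p ! n \<in> {-1,0,1}" using motzkin_step[OF mp n] .
  then have ge: "height p (i - 1) \<le> height p (Suc n)" using step height_Suc[OF n] by auto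
  have "psum p i (Suc n) \<noteq> 0" using no_return step by auto
  then have "height p (Suc n) \<noteq> height p (i - 1)" using psum_height[of i "Suc n" p] step j by auto
  then show ?case using ge by simp
qed

lemma paired_closes_down:
  assumes mp: "motzkin_path p" and pr: "paired p i j"
  shows "p ! (j - 1) = -1"
proof -
  from pr have a: "1 \<le> i" "i < j" "j \<le> length p" "psum p i j = 0" unfolding paired_def by auto
  have "height p j = height p (i - 1)" using a psum_height[of i j p] by simp
  moreover have "height p (i - 1) < height p (j - 1)" using paired_stays_above[OF mp pr, of "j - 1"] a by simp
  moreover have "height p j = height p (j - 1) + p ! (j - 1)" using height_Suc[of "j - 1" p] a by simp
  moreover have "p ! (j - 1) \<in> {-1,0,1}" using motzkin_step[OF mp, of "j - 1"] a by simp
  ultimately show ?thesis by auto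
qed

definition linked :: "int list \<Rightarrow> nat \<Rightarrow> nat \<Rightarrow> bool" where
  "linked p a b \<longleftrightarrow> paired p a b \<or> paired p b a"

lemma linked_sym: "linked p a b \<longleftrightarrow> linked p b a"
  unfolding linked_def by blast

lemma linked_unique:
  assumes mp: "motzkin_path p" and "linked p a b" "linked p a c"
  shows "b = c"
proof -
  have same_closer: False if "paired p i j" "paired p m j" "i < m" for i m j
  proof -
    have "height p j = height p (i - 1)" "height p j = height p (m - 1)"
      using that psum_height[of i j p] psum_height[of m j p] unfolding paired_def by auto
    moreover have "i \<le> m - 1" "m - 1 < j" using that paired_bounds[OF that(2)] by auto
    then have "height p (i - 1) < height p (m - 1)" by (rule paired_stays_above[OF mp that(1)])
    ultimately show False by simp
  qed
  have same_opener: False if "paired p i j" "paired p i m" "j < m" for i j m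
    using that unfolding paired_def by auto
  have mixed: "\<not> (paired p a b \<and> paired p c a)" "\<not> (paired p b a \<and> paired p a c)"
    using paired_closes_down[OF mp] paired_opens_up by force+
  show ?thesis using assms(2,3) mixed same_closer same_opener unfolding linked_def
    by (metis linorder_neqE_nat)
qed

text \<open>Every down step of a Motzkin path is the partner of some up step: take the last
  earlier position from which the path does not lie above the height after the down
  step.\<close>
lemma down_step_paired:
  assumes mp: "motzkin_path p" and i: "1 \<le> i" "i \<le> length p" and down: "p ! (i - 1) = -1"
  shows "\<exists>j. paired p j i"
proof -
  define A where "A = {t. 1 \<le> t \<and> t \<le> i \<and> height p (t - 1) \<le> height p i}"
  have "1 \<in> A" using motzkin_height_nonneg[OF mp i(2)] i unfolding A_def by (simp add: height_def)
  moreover have "finite A" unfolding A_def by simp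
  ultimately have jA: "Max A \<in> A" and jmax: "\<And>t. t \<in> A \<Longrightarrow> t \<le> Max A"
    by (auto intro: Max_in)
  define j where "j = Max A"
  have j: "1 \<le> j" "j \<le> i" "height p (j - 1) \<le> height p i" using jA unfolding j_def A_def by auto
  have hi: "height p i = height p (i - 1) - 1" using height_Suc[of "i - 1" p] i down by simp
  then have ji: "j < i" using j by (cases "j = i") auto
  have above: "height p i < height p (t - 1)" if "j < t" "t \<le> i" for t
  proof -
    have "t \<notin> A" using jmax that unfolding j_def by force
    then show ?thesis using that j unfolding A_def by auto
  qed
  have hj: "height p j = height p (j - 1) + p ! (j - 1)" using height_Suc[of "j - 1" p] j ji i by simp
  have "p ! (j - 1) \<in> {-1,0,1}" using motzkin_step[OF mp, of "j - 1"] ji i j by simp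
  moreover have "height p i < height p j" using above[of "Suc j"] ji by simp
  ultimately have up: "p ! (j - 1) = 1" and level: "height p (j - 1) = height p i" using hj j by auto
  have "paired p j i"
    unfolding paired_def
  proof (intro conjI allI impI)
    show "psum p j i = 0" using psum_height[of j i p] j ji i level by simp
    fix t assume "j < t \<and> t < i"
    then show "psum p j t \<noteq> 0" using above[of "Suc t"] psum_height[of j t p] j i level by simp
  qed (use j ji i up in auto)
  then show ?thesis by blast
qed

lemma nonzero_step_linked_or_white:
  assumes mp: "motzkin_path p" and i: "1 \<le> i" "i \<le> length p" and nz: "p ! (i - 1) \<noteq> 0"
  shows "(\<exists>j. 1 \<le> j \<and> j \<le> length p \<and> j \<noteq> i \<and> linked p i j) \<or> white p i"
proof (cases "p ! (i - 1) = 1")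
  case True
  then show ?thesis using i paired_bounds unfolding white_def linked_def by fastforce
next
  case False
  then have "p ! (i - 1) = -1" using motzkin_step[OF mp, of "i - 1"] i nz by auto
  then obtain j where "paired p j i" using down_step_paired[OF mp i] by blast
  then show ?thesis using paired_bounds[of p j i] unfolding linked_def by fastforce
qed

section \<open>Paths that are flat after position l\<close>

definition flat_after :: "nat \<Rightarrow> int list \<Rightarrow> bool" where
  "flat_after l p \<longleftrightarrow> (\<forall>t. l < t \<and> t \<le> length p \<longrightarrow> p ! (t - 1) = 0)"

lemma flat_height_const:
  assumes flat: "flat_after l p" and "l \<le> n" "n \<le> length p"
  shows "height p n = height p l"
  using assms(2,3)
proof (induction n rule: dec_induct)
  case base then show ?case by simp
next
  case (step m)
  have "p ! m = 0" using flat[unfolded flat_after_def, rule_format, of "Suc m"] step by simp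
  then show ?case using height_Suc[of m p] step by simp
qed

text \<open>In a path that is flat after l, all pairings stay inside {1..l}: a pairing
  reaching past l would return to its level already at position l.\<close>
lemma flat_paired_within:
  assumes mp: "motzkin_path p" and flat: "flat_after l p" and l: "l \<le> length p"
    and pr: "paired p a b"
  shows "a \<le> l \<and> b \<le> l"
proof -
  have b: "1 \<le> a" "a < b" "b \<le> length p" "p ! (a - 1) = 1" "psum p a b = 0"
     and no_return: "\<forall>t. a < t \<and> t < b \<longrightarrow> psum p a t \<noteq> 0"
    using pr unfolding paired_def by auto
  have al: "a \<le> l"
  proof (rule ccontr)
    assume "\<not> a \<le> l"
    then have "p ! (a - 1) = 0" using flat b unfolding flat_after_def by auto
    then show False using b by simp
  qed
  show ?thesis
  proof (rule ccontr)
    assume "\<not> (a \<le> l \<and> b \<le> l)"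
    then have bl: "l < b" using al by simp
    have "height p b = height p l" using flat_height_const[OF flat, of b] bl b by simp
    then have returns: "psum p a l = 0" using b psum_height[of a b p] psum_height[of a l p] al l by simp
    show False
    proof (cases "a = l")
      case True
      have "height p a = height p (a - 1) + 1" using height_Suc[of "a - 1" p] b by simp
      then show False using returns True psum_height[of a a p] b by simp
    next
      case False
      then show False using no_return returns al bl by auto
    qed
  qed
qed

lemma linked_flat_within:
  assumes "motzkin_path p" "flat_after l p" "l \<le> length p" "linked p a b"
  shows "1 \<le> a \<and> a \<le> l \<and> 1 \<le> b \<and> b \<le> l"
  using assms(4) flat_paired_within[OF assms(1-3), of a b] flat_paired_within[OF assms(1-3), of b a]
    paired_bounds[of p a b] paired_bounds[of p b a]
  unfolding linked_def by auto

lemma finite_paths: "finite (paths k r)"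
proof (rule finite_subset)
  show "paths k r \<subseteq> {xs. set xs \<subseteq> {-1,0,1} \<and> length xs = k}"
    unfolding paths_def motzkin_path_def by auto
  show "finite {xs. set xs \<subseteq> ({-1,0,1}::int set) \<and> length xs = k}"
    by (rule finite_lists_length_eq) simp
qed

text \<open>A path of length l has rank at most l, so there are none of larger rank.\<close>
lemma paths_rank_too_large:
  assumes "l < r"
  shows "paths l r = {}"
proof -
  have sum_bound: "sum_list p \<le> int (length p)" if "\<forall>a\<in>set p. a \<in> {-1,0,1}" for p :: "int list"
    using that by (induction p) auto
  have "rank p \<le> int l" if "p \<in> paths l r" for p
  proof -
    from that have "length p = l" "\<forall>a\<in>set p. a \<in> {-1,0,1}"
      unfolding paths_def motzkin_path_def by auto
    then show ?thesis using sum_bound unfolding rank_def by blast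
  qed
  then show ?thesis using assms unfolding paths_def by fastforce
qed

lemma flat_paths_padding:
  assumes lk: "l \<le> k"
  shows "{p \<in> paths k r. flat_after l p} = (\<lambda>q. q @ replicate (k - l) 0) ` paths l r"
proof
  show "(\<lambda>q. q @ replicate (k - l) 0) ` paths l r \<subseteq> {p \<in> paths k r. flat_after l p}"
  proof
    fix p assume "p \<in> (\<lambda>q. q @ replicate (k - l) 0) ` paths l r"
    then obtain q where q: "q \<in> paths l r" and p: "p = q @ replicate (k - l) 0" by blast
    have ql: "length q = l" and mq: "motzkin_path q" and rq: "sum_list q = int r"
      using q unfolding paths_def rank_def by auto
    have "0 \<le> sum_list (take n p)" for n
    proof (cases "n \<le> l")
      case True
      then show ?thesis using p mq ql unfolding motzkin_path_def by simp
    next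
      case False
      then have "sum_list (take n p) = sum_list q" using p ql by (simp add: sum_list_replicate)
      then show ?thesis using mq ql unfolding motzkin_path_def by (metis order_refl take_all)
    qed
    moreover have "\<forall>a\<in>set p. a \<in> {-1,0,1}"
      using p mq unfolding motzkin_path_def by (auto split: if_splits)
    ultimately have "motzkin_path p" unfolding motzkin_path_def by blast
    moreover have "length p = k" "rank p = int r" "flat_after l p"
      using p ql rq lk unfolding rank_def flat_after_def by (auto simp: nth_append sum_list_replicate)
    ultimately show "p \<in> {p \<in> paths k r. flat_after l p}" unfolding paths_def by auto
  qed
next
  show "{p \<in> paths k r. flat_after l p} \<subseteq> (\<lambda>q. q @ replicate (k - l) 0) ` paths l r"
  proof
    fix p assume "p \<in> {p \<in> paths k r. flat_after l p}"
    then have len: "length p = k" and mp: "motzkin_path p" and rp: "sum_list p = int r"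
      and flat: "flat_after l p"
      unfolding paths_def rank_def by auto
    have "drop l p = replicate (k - l) 0"
    proof (rule nth_equalityI)
      show "length (drop l p) = length (replicate (k - l) (0::int))" using len by simp
      fix i assume i: "i < length (drop l p)"
      then have "l < Suc (l + i) \<and> Suc (l + i) \<le> length p" using len by simp
      then have "p ! (Suc (l + i) - 1) = 0" using flat unfolding flat_after_def by blast
      then show "drop l p ! i = replicate (k - l) 0 ! i" using i lk len by simp
    qed
    then have pe: "p = take l p @ replicate (k - l) 0" by (metis append_take_drop_id)
    have "sum_list (take l p) = int r" using rp by (subst (asm) pe) (simp add: sum_list_replicate)
    then have "take l p \<in> paths l r"
      using mp len lk unfolding paths_def rank_def motzkin_path_def by (auto dest: in_set_takeD)
    then show "p \<in> (\<lambda>q. q @ replicate (k - l) 0) ` paths l r" using pe by blast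
  qed
qed

lemma card_flat_paths: "l \<le> k \<Longrightarrow> card {p \<in> paths k r. flat_after l p} = mcount l r"
  unfolding flat_paths_padding mcount_def by (rule card_image) (simp add: inj_on_def)

lemma sconn_refl: "sconn d p u u"
  unfolding sconn_def by simp

lemma sconn_step: "sadj d p u v \<Longrightarrow> sconn d p v w \<Longrightarrow> sconn d p u w"
  unfolding sconn_def by (simp add: converse_rtrancl_into_rtrancl)

lemma sconn_isolated: "sconn d p u v \<Longrightarrow> (\<And>w. \<not> sadj d p u w) \<Longrightarrow> v = u"
  unfolding sconn_def by (auto elim: converse_rtranclE)

lemma sconn_closed:
  assumes "sconn d p u v" "u \<in> C" "\<And>a b. a \<in> C \<Longrightarrow> sadj d p a b \<Longrightarrow> b \<in> C"
  shows "v \<in> C"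
  using assms(1) unfolding sconn_def
  by (induction rule: rtrancl_induct) (use assms(2,3) in auto)

section \<open>The stacked picture of 1_{l,k} over a path\<close>

lemma idl_edge:
  assumes "l \<le> k"
  shows "({a, b} \<in> idl l k \<and> a \<noteq> b) \<longleftrightarrow>
    (\<exists>j. 1 \<le> j \<and> j \<le> l \<and> ((a = Top j \<and> b = Bot j) \<or> (a = Bot j \<and> b = Top j)))"
  using assms unfolding idl_def doubleton_eq_iff by auto

lemma sadj_idl:
  assumes "l \<le> k"
  shows "sadj (idl l k) p u v \<longleftrightarrow>
    (\<exists>j. 1 \<le> j \<and> j \<le> l \<and> ((u = T j \<and> v = Mid j) \<or> (u = Mid j \<and> v = T j))) \<or>
    (\<exists>i j. linked p i j \<and> u = Mid i \<and> v = Mid j)"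
proof -
  have "(\<exists>a b. {a, b} \<in> idl l k \<and> a \<noteq> b \<and> u = emb a \<and> v = emb b) \<longleftrightarrow>
    (\<exists>j. 1 \<le> j \<and> j \<le> l \<and> ((u = T j \<and> v = Mid j) \<or> (u = Mid j \<and> v = T j)))"
  proof
    assume "\<exists>a b. {a, b} \<in> idl l k \<and> a \<noteq> b \<and> u = emb a \<and> v = emb b"
    then obtain a b where "{a, b} \<in> idl l k \<and> a \<noteq> b" "u = emb a" "v = emb b" by blast
    then show "\<exists>j. 1 \<le> j \<and> j \<le> l \<and> ((u = T j \<and> v = Mid j) \<or> (u = Mid j \<and> v = T j))"
      unfolding idl_edge[OF assms] emb_def by auto
  next
    assume "\<exists>j. 1 \<le> j \<and> j \<le> l \<and> ((u = T j \<and> v = Mid j) \<or> (u = Mid j \<and> v = T j))"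
    then obtain j where j: "1 \<le> j" "j \<le> l" "(u = T j \<and> v = Mid j) \<or> (u = Mid j \<and> v = T j)" by blast
    have "{Top j, Bot j} \<in> idl l k \<and> Top j \<noteq> Bot j" "{Bot j, Top j} \<in> idl l k \<and> Bot j \<noteq> Top j"
      unfolding idl_edge[OF assms] using j by blast+
    then show "\<exists>a b. {a, b} \<in> idl l k \<and> a \<noteq> b \<and> u = emb a \<and> v = emb b"
      using j(3) unfolding emb_def by (metis vtx.simps(5,6))
  qed
  then show ?thesis unfolding sadj_def linked_def by blast
qed

lemma sconn_idl_top_isolated:
  "l \<le> k \<Longrightarrow> l < i \<Longrightarrow> sconn (idl l k) p (T i) v \<Longrightarrow> v = T i"
  by (erule sconn_isolated) (simp add: sadj_idl)

text \<open>The block of i: the two vertices above i and above its partner.  It is closed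
  under adjacency, so it contains the component of T i.\<close>
definition block :: "int list \<Rightarrow> nat \<Rightarrow> svtx set" where
  "block p i = {T i, Mid i} \<union> {Mid m | m. linked p i m} \<union> {T m | m. linked p i m}"

lemma block_closed:
  assumes mp: "motzkin_path p" and lk: "l \<le> k"
    and a: "a \<in> block p i" and adj: "sadj (idl l k) p a b"
  shows "b \<in> block p i"
proof -
  have return: "m' = i" if "linked p i m" "linked p m m'" for m m'
    using that linked_unique[OF mp] linked_sym by metis
  have mem: "T j \<in> block p i \<longleftrightarrow> j = i \<or> linked p i j" "Mid j \<in> block p i \<longleftrightarrow> j = i \<or> linked p i j" for j
    unfolding block_def by auto
  from adj consider (vertical) j where "(a = T j \<and> b = Mid j) \<or> (a = Mid j \<and> b = T j)"
    | (middle) m m' where "linked p m m'" "a = Mid m" "b = Mid m'"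
    unfolding sadj_idl[OF lk] by blast
  then show ?thesis
  proof cases
    case vertical then show ?thesis using a mem by metis
  next
    case middle then show ?thesis using a return mem by metis
  qed
qed

lemma sconn_idl_block:
  assumes "motzkin_path p" "l \<le> k" "sconn (idl l k) p (T i) v"
  shows "v \<in> block p i"
  using sconn_closed[OF assms(3) _ block_closed[OF assms(1,2)]] by (simp add: block_def)

text \<open>No closed loop ever forms: a middle vertex at most l reaches the top row, and a
  middle vertex beyond l has at most one neighbour.\<close>
lemma kappa_idl:
  assumes mp: "motzkin_path p" and lk: "l \<le> k"
  shows "kappa k (idl l k) p = 0"
proof -
  let ?d = "idl l k"
  have no_loop: False
    if u: "u \<in> svert k" and all_mid: "\<forall>v. sconn ?d p u v \<longrightarrow> is_mid v"
      and deg2: "card {w. sadj ?d p u w} = 2" for u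
  proof -
    obtain i where ui: "u = Mid i" "1 \<le> i" "i \<le> k"
      using u all_mid sconn_refl unfolding svert_def is_mid_def by fastforce
    show False
    proof (cases "i \<le> l")
      case True
      then have "sconn ?d p u (T i)" using sconn_step sconn_refl ui by (metis sadj_idl[OF lk])
      then show False using all_mid unfolding is_mid_def by force
    next
      case False
      then have nbrs: "{w. sadj ?d p u w} = {Mid m | m. linked p i m}" using ui by (auto simp: sadj_idl[OF lk])
      show False
      proof (cases "\<exists>m. linked p i m")
        case True
        then obtain m where "linked p i m" by blast
        then have "{w. sadj ?d p u w} = {Mid m}" using nbrs linked_unique[OF mp] by auto
        then show False using deg2 by simp
      next
        case False
        then show False using deg2 nbrs by simp
      qed
    qed
  qed
  have "\<not> ((\<forall>v\<in>C. is_mid v) \<and> (\<forall>v\<in>C. card {w. sadj ?d p v w} = 2))"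
    if C: "C \<in> scomponents k ?d p" for C
  proof -
    obtain u where u: "u \<in> svert k" "C = {v. sconn ?d p u v}"
      using C unfolding scomponents_def by blast
    then show ?thesis using no_loop[OF u(1)] sconn_refl[of ?d p u] by auto
  qed
  then have "{C \<in> scomponents k ?d p. (\<forall>v\<in>C. is_mid v) \<and> (\<forall>v\<in>C. card {w. sadj ?d p v w} = 2)} = {}"
    by blast
  then show ?thesis unfolding kappa_def by (simp only: card.empty)
qed

section \<open>The diagonal coefficient of 1_{l,k}\<close>

definition top_factor_is :: "nat \<Rightarrow> vtx set set \<Rightarrow> int list \<Rightarrow> int list \<Rightarrow> bool" where
  "top_factor_is k d p q \<longleftrightarrow>
     (\<forall>i j. 1 \<le> i \<and> i \<le> k \<and> 1 \<le> j \<and> j \<le> k \<and> i \<noteq> j \<longrightarrow>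
        (linked q i j \<longleftrightarrow> sconn d p (T i) (T j))) \<and>
     (\<forall>i. 1 \<le> i \<and> i \<le> k \<longrightarrow> (white q i \<longleftrightarrow> (\<exists>m. white p m \<and> sconn d p (T i) (Mid m))))"

lemma act_coeff_top_factor:
  "act_coeff x k d p q = (if top_factor_is k d p q then x ^ kappa k d p else 0)"
  unfolding act_coeff_def top_factor_is_def linked_def by simp

text \<open>If some step beyond l is nonzero, the top 1-factor cannot be that of p: the
  isolated top vertex i would have to be linked or white.\<close>
lemma diag_coeff_not_flat:
  assumes lk: "l \<le> k" and mp: "motzkin_path p" and len: "length p = k"
    and not_flat: "\<not> flat_after l p"
  shows "act_coeff x k (idl l k) p p = 0"
proof -
  obtain i where i: "l < i" "i \<le> k" "p ! (i - 1) \<noteq> 0" using not_flat len unfolding flat_after_def by auto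
  have isolated: "sconn (idl l k) p (T i) v \<Longrightarrow> v = T i" for v
    using sconn_idl_top_isolated[OF lk i(1)] .
  have "\<not> top_factor_is k (idl l k) p p"
  proof
    assume top: "top_factor_is k (idl l k) p p"
    from nonzero_step_linked_or_white[OF mp _ _ i(3)] i len
    consider (linked) j where "1 \<le> j" "j \<le> k" "j \<noteq> i" "linked p i j" | (white) "white p i"
      by auto
    then show False
    proof cases
      case linked
      then have "sconn (idl l k) p (T i) (T j)" using top i unfolding top_factor_is_def by auto
      then show False using isolated linked by blast
    next
      case white
      then obtain m where "sconn (idl l k) p (T i) (Mid m)" using top i unfolding top_factor_is_def by auto
      then show False using isolated by blast
    qed
  qed
  then show ?thesis by (simp add: act_coeff_top_factor)
qed

lemma top_links_flat:
  assumes lk: "l \<le> k" and mp: "motzkin_path p" and len: "length p = k" and flat: "flat_after l p"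
    and ij: "1 \<le> i" "i \<le> k" "i \<noteq> j"
  shows "linked p i j \<longleftrightarrow> sconn (idl l k) p (T i) (T j)"
proof
  assume link: "linked p i j"
  then have b: "1 \<le> i" "i \<le> l" "1 \<le> j" "j \<le> l" using linked_flat_within[OF mp flat] lk len by auto
  have "sadj (idl l k) p (T i) (Mid i)" "sadj (idl l k) p (Mid i) (Mid j)" "sadj (idl l k) p (Mid j) (T j)"
    using b link by (auto simp: sadj_idl[OF lk])
  then show "sconn (idl l k) p (T i) (T j)" by (meson sconn_refl sconn_step)
next
  assume "sconn (idl l k) p (T i) (T j)"
  then have "T j \<in> block p i" by (rule sconn_idl_block[OF mp lk])
  then show "linked p i j" using ij unfolding block_def by auto
qed

lemma top_white_flat:
  assumes lk: "l \<le> k" and mp: "motzkin_path p" and len: "length p = k" and flat: "flat_after l p"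
    and i: "1 \<le> i" "i \<le> k"
  shows "white p i \<longleftrightarrow> (\<exists>m. white p m \<and> sconn (idl l k) p (T i) (Mid m))"
proof
  assume w: "white p i"
  then have "i \<le> l" using flat i len unfolding white_def flat_after_def by (metis not_le one_neq_zero)
  then have "sadj (idl l k) p (T i) (Mid i)" using i by (simp add: sadj_idl[OF lk])
  then show "\<exists>m. white p m \<and> sconn (idl l k) p (T i) (Mid m)" using w sconn_step sconn_refl by blast
next
  assume "\<exists>m. white p m \<and> sconn (idl l k) p (T i) (Mid m)"
  then obtain m where w: "white p m" and "sconn (idl l k) p (T i) (Mid m)" by blast
  then have "Mid m \<in> block p i" using sconn_idl_block[OF mp lk] by blast
  moreover have "\<not> linked p i m"
    using w paired_closes_down[OF mp, of i m] unfolding linked_def white_def by force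
  ultimately show "white p i" using w unfolding block_def by auto
qed

lemma diag_coeff_flat:
  assumes lk: "l \<le> k" and mp: "motzkin_path p" and len: "length p = k" and flat: "flat_after l p"
  shows "act_coeff x k (idl l k) p p = 1"
  using top_links_flat[OF assms] top_white_flat[OF assms] kappa_idl[OF mp lk]
  unfolding act_coeff_top_factor top_factor_is_def by simp

lemma diag_coeff_idl:
  assumes "l \<le> k" and "p \<in> paths k r"
  shows "act_coeff x k (idl l k) p p = (if flat_after l p then 1 else 0)"
  using assms diag_coeff_flat[of l k p x] diag_coeff_not_flat[of l k p x]
  unfolding paths_def by auto

theorem mainTheorem12:
  fixes x :: "'a::field" and k r l :: nat
  assumes "r \<le> k" and "l \<le> k"
  shows "character x k r (idl l k) = (if r \<le> l then of_nat (mcount l r) else 0)"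
proof -
  have "character x k r (idl l k) = (\<Sum>p\<in>paths k r. if flat_after l p then 1 else 0)"
    unfolding character_def using diag_coeff_idl[OF assms(2)] by (rule sum.cong[OF refl])
  also have "\<dots> = of_nat (card {p \<in> paths k r. flat_after l p})"
    by (simp add: sum.If_cases[OF finite_paths] Int_def)
  also have "\<dots> = of_nat (mcount l r)"
    using card_flat_paths[OF assms(2)] by simp
  also have "\<dots> = (if r \<le> l then of_nat (mcount l r) else 0)"
    using paths_rank_too_large[of l r] unfolding mcount_def by auto
  finally show ?thesis .
qed

end
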